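(* Let $M\in\mathrm{SL}(3,\mathbb R)$, $\mathcal D=\mathbb S_1^1$, $K=\mathcal G_{\mathcal D}(M)$, and let $(u_1,\vec v_1),\dots,(u_K,\vec v_K)\in\mathcal Q_{\mathcal D}(M)$ satisfy (V1)–(V3) and $u_i\ge0$ for all $i$. Then for all $1\le i<j\le K-1$ we have $|\vec v_i-\vec v_j|>|\vec v_j|$, and for all $1\le i<j<k\le K-1$ we have $|\vec v_i-\vec v_j-\vec v_k|\ge|\vec v_k|$.
   Context: Row vectors in $\mathbb R^3$ are written $(u,\vec v)$, $u\in\mathbb R$, $\vec v\in\mathbb R^2$; $\mathbb Z^3M=\{\vec mM:\vec m\in\mathbb Z^3\}$. For $\mathcal D\subseteq\mathbb S_1^1$ (unit circle): $\mathcal Q_{\mathcal D}(M,t)=\{(u,\vec v)\in\mathbb Z^3M:-t<u<1-t,\ \vec v\in\mathbb R_{>0}\mathcal D\}$ for $t\in(0,1)$; $\mathcal Q_{\mathcal D}(M)=\{(u,\vec v)\in\mathbb Z^3M:|u|<1,\ \vec v\in\mathbb R_{>0}\mathcal D\}$; $F_{\mathcal D}(M,t)=\min\{|\vec v|:(u,\vec v)\in\mathcal Q_{\mathcal D}(M,t)\}$; $\mathcal F_{\mathcal D}(M)=\{F_{\mathcal D}(M,t):0<t<1\}$ and $\mathcal G_{\mathcal D}(M)=|\mathcal F_{\mathcal D}(M)|$. Conditions: (V1) $0<|\vec v_1|<\cdots<|\vec v_K|$; (V2) each $\delta\in\mathcal F_{\mathcal D}(M)$ equals $|\vec v_i|$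 for some $i$; (V3) for each $i$ there is $t\in(0,1)$ with $(u_i,\vec v_i)\in\mathcal Q_{\mathcal D}(M,t)$ and $|\vec v_i|=F_{\mathcal D}(M,t)$. (For $\mathcal D=\mathbb S_1^1$, replacing $(u_i,\vec v_i)$ by its negative, one may always arrange $u_i\ge0$.) *)

theory Defs
  imports "HOL-Analysis.Analysis"
begin

definition split3 :: "real^3 \<Rightarrow> real \<times> (real^2)" where
  "split3 y = (y$1, vector [y$2, y$3])"

definition latt :: "real^3^3 \<Rightarrow> (real \<times> (real^2)) set" where
  "latt M = {split3 (m v* M) | m. \<forall>i. m$i \<in> \<int>}"

definition pos_cone :: "(real^2) set \<Rightarrow> (real^2) set" where
  "pos_cone D = {c *\<^sub>R d | c d. c > 0 \<and> d \<in> D}"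

definition Qt :: "(real^2) set \<Rightarrow> real^3^3 \<Rightarrow> real \<Rightarrow> (real \<times> (real^2)) set" where
  "Qt D M t = {(u, v) \<in> latt M. - t < u \<and> u < 1 - t \<and> v \<in> pos_cone D}"

definition QQ :: "(real^2) set \<Rightarrow> real^3^3 \<Rightarrow> (real \<times> (real^2)) set" where
  "QQ D M = {(u, v) \<in> latt M. \<bar>u\<bar> < 1 \<and> v \<in> pos_cone D}"

text \<open>F_D(M,t): the minimum of |v| over Q_D(M,t) (the minimum is attained).\<close>
definition FF :: "(real^2) set \<Rightarrow> real^3^3 \<Rightarrow> real \<Rightarrow> real" where
  "FF D M t = Inf {norm v | u v. (u, v) \<in> Qt D M t}"

definition FFset :: "(real^2) set \<Rightarrow> real^3^3 \<Rightarrow> real set" where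
  "FFset D M = {FF D M t | t. 0 < t \<and> t < 1}"

definition GG :: "(real^2) set \<Rightarrow> real^3^3 \<Rightarrow> nat" where
  "GG D M = card (FFset D M)"

end

theory Submission
  imports Defs
begin

text \<open>Only (V1), (V3), \<open>u\<^sub>i \<ge> 0\<close> and the group structure of \<open>\<int>\<^sup>3M\<close> are used. Every nonzero lattice vector \<open>(x, y)\<close> with \<open>|x| < 1/2\<close> lies, possibly after a sign change,
  in every window \<open>-t < u < 1 - t\<close>, so \<open>|y| \<ge> |v\<^sub>K|\<close>. Hence \<open>u\<^sub>i \<ge> 1/2\<close> for \<open>i < K\<close>, all
  differences \<open>u\<^sub>i - u\<^sub>j\<close> with \<open>i, j < K\<close> are smaller than \<open>1/2\<close> in absolute value, and
  \<open>|v\<^sub>i - v\<^sub>j| \<ge> |v\<^sub>K| > |v\<^sub>j|\<close>. For the second claim, minimality of \<open>|v\<^sub>j|\<close> forces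
  \<open>u\<^sub>j < u\<^sub>i\<close>, so \<open>(u\<^sub>k, v\<^sub>k) - (u\<^sub>i, v\<^sub>i) + (u\<^sub>j, v\<^sub>j)\<close> still lies in the window in which
  \<open>|v\<^sub>k|\<close> is minimal.\<close>

lemma vector_matrix_mult_diff_left: "(x - y) v* A = x v* A - y v* (A :: 'a::comm_ring_1^'m^'n)"
  by (simp add: vec_eq_iff vector_matrix_mult_def left_diff_distrib sum_subtractf)

lemma split3_diff: "split3 (x - y) = (fst (split3 x) - fst (split3 y), snd (split3 x) - snd (split3 y))"
  unfolding split3_def by (simp add: vec_eq_iff forall_2 vector_def)

lemma latt_diff:
  assumes "(a, b) \<in> latt M" "(c, d) \<in> latt M"
  shows "(a - c, b - d) \<in> latt M"
proof -
  obtain m where m: "(a, b) = split3 (m v* M)" "\<forall>i. m$i \<in> \<int>"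
    using assms(1) unfolding latt_def by blast
  obtain m' where m': "(c, d) = split3 (m' v* M)" "\<forall>i. m'$i \<in> \<int>"
    using assms(2) unfolding latt_def by blast
  have "(a - c, b - d) = split3 ((m - m') v* M)"
    using m(1) m'(1) by (simp add: vector_matrix_mult_diff_left split3_diff prod_eq_iff)
  moreover have "\<forall>i. (m - m')$i \<in> \<int>"
    using m(2) m'(2) by simp
  ultimately show ?thesis
    unfolding latt_def by blast
qed

lemma latt_uminus:
  assumes "(a, b) \<in> latt M"
  shows "(- a, - b) \<in> latt M"
  using latt_diff[OF latt_diff[OF assms assms] assms] by simp

lemma pos_cone_unit_sphere: "pos_cone (sphere 0 1) = - {0 :: real^2}"
proof -
  have "v \<in> pos_cone (sphere 0 1)" if "v \<noteq> 0" for v :: "real^2"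
    unfolding pos_cone_def
    using that by (intro CollectI exI[of _ "norm v"] exI[of _ "v /\<^sub>R norm v"]) simp
  then show ?thesis
    unfolding pos_cone_def by auto
qed

lemma Qt_unit_sphere_iff:
  "(x, y) \<in> Qt (sphere 0 1) M t \<longleftrightarrow> (x, y) \<in> latt M \<and> - t < x \<and> x < 1 - t \<and> y \<noteq> 0"
  unfolding Qt_def pos_cone_unit_sphere by auto

lemma FF_le_norm:
  assumes "(x, y) \<in> latt M" "y \<noteq> 0" "- t < x" "x < 1 - t"
  shows "FF (sphere 0 1) M t \<le> norm y"
proof -
  have "(x, y) \<in> Qt (sphere 0 1) M t"
    using assms by (simp add: Qt_unit_sphere_iff)
  then show ?thesis
    unfolding FF_def by (intro cInf_lower) (auto intro!: bdd_belowI[of _ 0])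
qed

lemma FF_le_norm_if_abs_lt_half:
  assumes "(x, y) \<in> latt M" "y \<noteq> 0" "\<bar>x\<bar> < 1/2" "0 < t" "t < 1"
  shows "FF (sphere 0 1) M t \<le> norm y"
proof (cases "- t < x \<and> x < 1 - t")
  case True
  then show ?thesis
    using FF_le_norm[OF assms(1,2)] by blast
next
  case False
  then have "- t < - x \<and> - x < 1 - t"
    using assms(3-5) by auto
  then show ?thesis
    using FF_le_norm[OF latt_uminus[OF assms(1)]] assms(2) by simp
qed

lemma half_le_if_norm_lt_FF:
  assumes "(x, y) \<in> latt M" "y \<noteq> 0" "0 \<le> x"
    and "norm y < FF (sphere 0 1) M t" "0 < t" "t < 1"
  shows "1/2 \<le> x"
  using FF_le_norm_if_abs_lt_half[OF assms(1,2) _ assms(5,6)] assms(3,4) by fastforce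

lemma FF_le_norm_diff_if_half_le:
  assumes "(a, b) \<in> latt M" "(c, d) \<in> latt M" "b \<noteq> d"
    and "1/2 \<le> a" "a < 1" "1/2 \<le> c" "c < 1" "0 < t" "t < 1"
  shows "FF (sphere 0 1) M t \<le> norm (b - d)"
proof -
  have "\<bar>a - c\<bar> < 1/2"
    using assms(4-7) by (auto simp: abs_if)
  then show ?thesis
    using FF_le_norm_if_abs_lt_half[OF latt_diff[OF assms(1,2)]] assms(3,8,9) by simp
qed

lemma less_fst_if_shorter_than_minimal:
  assumes "(x, y) \<in> latt M" "y \<noteq> 0" "0 \<le> x" "0 < t"
    and "(x', y') \<in> Qt (sphere 0 1) M t" "norm y' = FF (sphere 0 1) M t" "norm y < norm y'"
  shows "x' < x"
proof (rule ccontr)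
  assume "\<not> x' < x"
  with assms(3-5) have "- t < x \<and> x < 1 - t"
    by (auto simp: Qt_unit_sphere_iff)
  then show False
    using FF_le_norm[OF assms(1,2), of t] assms(6,7) by simp
qed

lemma norm_le_norm_diff_diff_if_minimal:
  assumes "(a, b) \<in> latt M" "(c, d) \<in> latt M"
    and "(e, f) \<in> Qt (sphere 0 1) M s" "norm f = FF (sphere 0 1) M s" "0 < s"
    and "c < a" "a < 1" "1/2 \<le> c" "1/2 \<le> e"
    and "norm f < FF (sphere 0 1) M t" "0 < t" "t < 1"
  shows "norm f \<le> norm (b - d - f)"
proof -
  have ef: "(e, f) \<in> latt M" "e < 1 - s" "f \<noteq> 0"
    using assms(3) by (simp_all add: Qt_unit_sphere_iff)
  have ac: "(a - c, b - d) \<in> latt M" "\<bar>a - c\<bar> < 1/2"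
    using latt_diff[OF assms(1,2)] assms(6-8) by auto
  show ?thesis
  proof (cases "f = b - d")
    case True
    then have "FF (sphere 0 1) M t \<le> norm f"
      using FF_le_norm_if_abs_lt_half[OF ac(1) _ ac(2) assms(11,12)] ef(3) by simp
    with assms(10) show ?thesis
      by simp
  next
    case False
    have "- s < e - (a - c) \<and> e - (a - c) < 1 - s"
      using ef(2) assms(5-9) by auto
    then have "FF (sphere 0 1) M s \<le> norm (f - (b - d))"
      using FF_le_norm[OF latt_diff[OF ef(1) ac(1)]] False by simp
    then show ?thesis
      using assms(4) by (simp add: norm_minus_commute)
  qed
qed

theorem proposition5p2:
  fixes M :: "real^3^3" and K :: nat and u :: "nat \<Rightarrow> real" and v :: "nat \<Rightarrow> real^2"
  defines "D \<equiv> sphere (0::real^2) 1"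
  assumes SL: "det M = 1"
    and K: "K = GG D M"
    and inQ: "\<forall>i\<in>{1..K}. (u i, v i) \<in> QQ D M"
    and V1: "\<forall>i\<in>{1..K}. 0 < norm (v i)"
    and V1': "\<forall>i j. 1 \<le> i \<and> i < j \<and> j \<le> K \<longrightarrow> norm (v i) < norm (v j)"
    and V2: "\<forall>\<delta>\<in>FFset D M. \<exists>i\<in>{1..K}. \<delta> = norm (v i)"
    and V3: "\<forall>i\<in>{1..K}. \<exists>t. 0 < t \<and> t < 1 \<and> (u i, v i) \<in> Qt D M t \<and> norm (v i) = FF D M t"
    and upos: "\<forall>i\<in>{1..K}. 0 \<le> u i"
  shows "(\<forall>i j. 1 \<le> i \<and> i < j \<and> j \<le> K - 1 \<longrightarrow> norm (v i - v j) > norm (v j))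
       \<and> (\<forall>i j k. 1 \<le> i \<and> i < j \<and> j < k \<and> k \<le> K - 1 \<longrightarrow> norm (v i - v j - v k) \<ge> norm (v k))"
proof -
  obtain T where T: "\<And>i. i \<in> {1..K} \<Longrightarrow> 0 < T i \<and> T i < 1
      \<and> (u i, v i) \<in> Qt (sphere 0 1) M (T i) \<and> norm (v i) = FF (sphere 0 1) M (T i)"
    using bchoice[OF V3] unfolding D_def by blast
  have Q: "(u i, v i) \<in> latt M" "u i < 1" "v i \<noteq> 0" if "i \<in> {1..K}" for i
    using T[OF that] unfolding Qt_unit_sphere_iff by auto
  have TK: "0 < T K" "T K < 1" "norm (v K) = FF (sphere 0 1) M (T K)" if "0 < K"
    using T[of K] that by auto
  have shorter: "norm (v i) < FF (sphere 0 1) M (T K)" if "1 \<le> i" "i < K" for i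
    using V1'[rule_format, of i K] TK(3) that by simp
  have half: "1/2 \<le> u i" if "1 \<le> i" "i < K" for i
    using half_le_if_norm_lt_FF[OF Q(1,3) _ shorter TK(1,2)] upos that by auto
  have "norm (v j) < norm (v i - v j)" if "1 \<le> i" "i < j" "j < K" for i j
    using FF_le_norm_diff_if_half_le[OF Q(1)[of i] Q(1)[of j] _ half[of i] Q(2)[of i] half[of j]
        Q(2)[of j] TK(1,2)] shorter[of j] V1'[rule_format, of i j] that by force
  moreover have "norm (v k) \<le> norm (v i - v j - v k)" if "1 \<le> i" "i < j" "j < k" "k < K" for i j k
  proof -
    have "u j < u i"
      using less_fst_if_shorter_than_minimal[OF Q(1,3)[of i], of "T j" "u j" "v j"]
        T[of j] upos V1'[rule_format, of i j] that by auto
    then show ?thesis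
      using norm_le_norm_diff_diff_if_minimal[OF Q(1)[of i] Q(1)[of j], of "u k" "v k" "T k" "T K"]
        T[of k] TK Q(2)[of i] half[of j] half[of k] shorter[of k] that by auto
  qed
  moreover have "j \<le> K - 1 \<longleftrightarrow> j < K" if "1 \<le> j" for j
    using that by linarith
  ultimately show ?thesis
    by (meson order.strict_trans1 less_imp_le_nat)
qed

end
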